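(* Let $A\in\mathbb{R}^{n\times n}$ be symmetric with orthonormal eigenbasis $\vec{q}_1,\dots,\vec{q}_n$, $A\vec{q}_i=\lambda_i\vec{q}_i$, let $s$ be the number of distinct eigenvalues of $A$, and let $\vec{x}_0\in\mathbb{R}^n$ satisfy $\vec{q}_i^\top\vec{x}_0\neq 0$ for all $i$. Let $\vec{x}_{t+1}=A\vec{x}_t$, $X_k=[\vec{x}_0\ \cdots\ \vec{x}_k]$, $Y_k=[\vec{x}_1\ \cdots\ \vec{x}_{k+1}]$ and $\hat{A}_k=Y_kX_k^{\dagger}$. Assume $A$ has at least one eigenvalue of algebraic multiplicity greater than one, and let $\lambda^*=\max_{i:\,m(\lambda_i)>1}|\lambda_i|$. If $k\ge s$, then $\|A-\hat{A}_k\|_2=\lambda^*$.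
   Context: $m(\lambda)$ denotes the algebraic multiplicity of the eigenvalue $\lambda$; $M^{\dagger}$ is the Moore–Penrose pseudo-inverse; $\|\cdot\|_2$ is the spectral norm. *)

theory Defs
  imports "Jordan_Normal_Form.Char_Poly" "HOL-Computational_Algebra.Polynomial"
begin

definition alg_mult :: "real mat \<Rightarrow> real \<Rightarrow> nat" where
  "alg_mult A lam = order lam (char_poly A)"

definition pinv :: "real mat \<Rightarrow> real mat" where
  "pinv M = (THE P. P \<in> carrier_mat (dim_col M) (dim_row M) \<and>
      M * P * M = M \<and> P * M * P = P \<and>
      transpose_mat (M * P) = M * P \<and> transpose_mat (P * M) = P * M)"

definition vnorm :: "real vec \<Rightarrow> real" where
  "vnorm v = sqrt (v \<bullet> v)"

definition spec_norm :: "real mat \<Rightarrow> real" where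
  "spec_norm M = Sup {vnorm (M *\<^sub>v v) | v. v \<in> carrier_vec (dim_col M) \<and> vnorm v = 1}"

end

theory Submission
  imports Defs
begin

text \<open>
  Split \<open>x\<^sub>0\<close> into its components \<open>v\<^sub>\<mu>\<close> in the eigenspaces \<open>E\<^sub>\<mu>\<close> of the \<open>s\<close> distinct
  eigenvalues. Then \<open>x\<^sub>j = \<Sum>\<^sub>\<mu> \<mu>\<^sup>j v\<^sub>\<mu>\<close>, i.e. \<open>X\<^sub>k = V W\<^sup>T\<close>, where the columns \<open>v\<^sub>\<mu>\<close> of \<open>V\<close> are
  orthogonal and nonzero and \<open>W\<close> is the \<open>(k+1) \<times> s\<close> Vandermonde matrix of the eigenvalues, which
  has full column rank because \<open>k + 1 > s\<close>. The full-rank factorisation formula for the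
  pseudo-inverse shows that \<open>X\<^sub>k X\<^sub>k\<^sup>\<dagger>\<close> is the orthogonal projection \<open>P\<close> onto the span of the
  \<open>v\<^sub>\<mu>\<close>; since \<open>Y\<^sub>k = A X\<^sub>k\<close> we get \<open>A - Y\<^sub>k X\<^sub>k\<^sup>\<dagger> = A (I - P)\<close>. On each \<open>E\<^sub>\<mu>\<close> this map is \<open>\<mu>\<close>
  times the projection onto the orthogonal complement of \<open>v\<^sub>\<mu>\<close> in \<open>E\<^sub>\<mu>\<close>, which vanishes when
  \<open>E\<^sub>\<mu>\<close> is one-dimensional and has norm \<open>|\<mu>|\<close> otherwise.
\<close>

lemma assoc_mult_mat_dim:
  fixes A :: "'a :: semiring_0 mat"
  assumes "dim_col A = dim_row B" "dim_col B = dim_row C"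
  shows "A * B * C = A * (B * C)"
  using assms by (intro assoc_mult_mat[of A _ "dim_col A" B _ C "dim_col C"]) auto

lemma transpose_mult_dim:
  fixes A :: "'a :: comm_semiring_0 mat"
  assumes "dim_col A = dim_row B"
  shows "transpose_mat (A * B) = transpose_mat B * transpose_mat A"
  using assms by (intro transpose_mult[of A _ "dim_col A" B]) auto

lemma pinv_unique:
  fixes M P P' :: "real mat"
  assumes P: "P \<in> carrier_mat (dim_col M) (dim_row M)" and P': "P' \<in> carrier_mat (dim_col M) (dim_row M)"
    and MPM: "M * P * M = M" and PMP: "P * M * P = P"
    and MP: "transpose_mat (M * P) = M * P" and PM: "transpose_mat (P * M) = P * M"
    and MPM': "M * P' * M = M" and PMP': "P' * M * P' = P'"
    and MP': "transpose_mat (M * P') = M * P'" and PM': "transpose_mat (P' * M) = P' * M"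
  shows "P = P'"
proof -
  note dims = carrier_matD[OF P] carrier_matD[OF P']
  note simps = assoc_mult_mat_dim transpose_mult_dim dims
  have Mt_right: "transpose_mat M = transpose_mat M * (M * P')"
    using arg_cong[OF MPM', of transpose_mat] MP' by (simp add: simps)
  have Mt_left: "transpose_mat M = P * M * transpose_mat M"
    using arg_cong[OF MPM, of transpose_mat] PM by (simp add: simps)
  have MP_t: "transpose_mat P * transpose_mat M = M * P" and PM_t: "transpose_mat M * transpose_mat P' = P' * M"
    using MP PM' by (simp_all add: simps)
  have "P = P * (transpose_mat P * transpose_mat M)"
    using PMP MP_t by (simp add: simps)
  also have "\<dots> = P * (transpose_mat P * (transpose_mat M * (M * P')))"
    by (simp only: Mt_right[symmetric])
  also have "\<dots> = P * (M * P) * (M * P')"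
    using MP_t by (simp add: simps flip: MP_t)
  also have "\<dots> = P * M * P'"
    using PMP by (simp only: assoc_mult_mat_dim[symmetric] dims index_mult_mat)
  finally have P_eq: "P = P * M * P'" .
  have "P' = transpose_mat M * transpose_mat P' * P'"
    using PMP' PM_t by (simp add: simps)
  also have "\<dots> = P * M * transpose_mat M * transpose_mat P' * P'"
    by (simp only: Mt_left[symmetric])
  also have "\<dots> = P * M * (P' * M * P')"
    using PM_t by (simp add: simps flip: PM_t)
  finally have "P' = P * M * P'"
    unfolding PMP' .
  with P_eq show ?thesis by simp
qed

lemma pinv_eqI:
  fixes M P :: "real mat"
  assumes "P \<in> carrier_mat (dim_col M) (dim_row M)"
    and "M * P * M = M" "P * M * P = P" "transpose_mat (M * P) = M * P" "transpose_mat (P * M) = P * M"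
  shows "pinv M = P"
  unfolding pinv_def
proof (rule the_equality)
  fix P' assume "P' \<in> carrier_mat (dim_col M) (dim_row M) \<and> M * P' * M = M \<and> P' * M * P' = P' \<and>
      transpose_mat (M * P') = M * P' \<and> transpose_mat (P' * M) = P' * M"
  then show "P' = P"
    using pinv_unique[of P' M P] assms by blast
qed (use assms in blast)

lemma inverse_of_symmetric_mat:
  fixes B D :: "'a :: field mat"
  assumes B: "B \<in> carrier_mat s s" and D: "D \<in> carrier_mat s s"
    and B_sym: "transpose_mat B = B" and DB: "D * B = 1\<^sub>m s"
  shows "B * D = 1\<^sub>m s" and "transpose_mat D = D"
proof -
  show BD: "B * D = 1\<^sub>m s"
    by (rule mat_mult_left_right_inverse[OF D B DB])
  have Dt: "transpose_mat D \<in> carrier_mat s s"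
    using D by simp
  have DtB: "transpose_mat D * B = 1\<^sub>m s"
    using arg_cong[OF BD, of transpose_mat] B_sym transpose_mult[OF B D] by simp
  have "transpose_mat D = transpose_mat D * (B * D)"
    using BD Dt by simp
  also have "\<dots> = D"
    using DtB D by (simp flip: assoc_mult_mat[OF Dt B D])
  finally show "transpose_mat D = D" .
qed

lemma pinv_full_rank_factorization:
  fixes V W Dv Dw :: "real mat"
  assumes V: "V \<in> carrier_mat m s" and W: "W \<in> carrier_mat p s"
    and Dv: "Dv \<in> carrier_mat s s" and Dw: "Dw \<in> carrier_mat s s"
    and Dv_inv: "Dv * (transpose_mat V * V) = 1\<^sub>m s" and Dw_inv: "Dw * (transpose_mat W * W) = 1\<^sub>m s"
  shows "pinv (V * transpose_mat W) = W * (Dw * (Dv * transpose_mat V))"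
    and "V * transpose_mat W * pinv (V * transpose_mat W) = V * (Dv * transpose_mat V)"
proof -
  note dims = carrier_matD[OF V] carrier_matD[OF W] carrier_matD[OF Dv] carrier_matD[OF Dw]
  note simps = dims assoc_mult_mat_dim transpose_mult_dim
  have Dv_sym: "transpose_mat Dv = Dv"
    by (rule inverse_of_symmetric_mat(2)[OF _ Dv _ Dv_inv]) (use V in \<open>auto simp: simps\<close>)
  have Dw_sym: "transpose_mat Dw = Dw"
    by (rule inverse_of_symmetric_mat(2)[OF _ Dw _ Dw_inv]) (use W in \<open>auto simp: simps\<close>)
  have Dw_right: "transpose_mat W * W * Dw = 1\<^sub>m s"
    by (rule inverse_of_symmetric_mat(1)[OF _ Dw _ Dw_inv]) (use W in \<open>auto simp: simps\<close>)
  have cancel_V: "Dv * (transpose_mat V * (V * Z)) = Z" if "dim_row Z = s" for Z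
    using arg_cong[OF Dv_inv, of "\<lambda>N. N * Z"] that by (simp add: simps)
  have cancel_W: "Dw * (transpose_mat W * (W * Z)) = Z" if "dim_row Z = s" for Z
    using arg_cong[OF Dw_inv, of "\<lambda>N. N * Z"] that by (simp add: simps)
  have cancel_W': "transpose_mat W * (W * (Dw * Z)) = Z" if "dim_row Z = s" for Z
    using arg_cong[OF Dw_right, of "\<lambda>N. N * Z"] that by (simp add: simps)
  let ?M = "V * transpose_mat W" and ?P = "W * (Dw * (Dv * transpose_mat V))"
  have MP: "?M * ?P = V * (Dv * transpose_mat V)"
    by (simp add: simps cancel_W')
  have PM: "?P * ?M = W * (Dw * transpose_mat W)"
    by (simp add: simps cancel_V)
  have "pinv ?M = ?P"
  proof (rule pinv_eqI)
    show "?P \<in> carrier_mat (dim_col ?M) (dim_row ?M)"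
      by (simp add: dims carrier_matI)
    show "?M * ?P * ?M = ?M"
      unfolding MP by (simp add: simps cancel_V)
    show "?P * ?M * ?P = ?P"
      unfolding PM by (simp add: simps cancel_W)
    show "transpose_mat (?M * ?P) = ?M * ?P"
      unfolding MP by (simp add: simps Dv_sym)
    show "transpose_mat (?P * ?M) = ?P * ?M"
      unfolding PM by (simp add: simps Dw_sym)
  qed
  then show "pinv ?M = ?P" and "?M * pinv ?M = V * (Dv * transpose_mat V)"
    using MP by simp_all
qed

lemma gram_left_inverse:
  fixes W :: "real mat"
  assumes W: "W \<in> carrier_mat p s"
    and W_inj: "\<And>y. y \<in> carrier_vec s \<Longrightarrow> W *\<^sub>v y = 0\<^sub>v p \<Longrightarrow> y = 0\<^sub>v s"
  obtains D where "D \<in> carrier_mat s s" and "D * (transpose_mat W * W) = 1\<^sub>m s"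
proof -
  have G: "transpose_mat W * W \<in> carrier_mat s s"
    using W by simp
  have "y = 0\<^sub>v s" if y: "y \<in> carrier_vec s" and Gy: "(transpose_mat W * W) *\<^sub>v y = 0\<^sub>v s" for y
  proof -
    have Wy: "W *\<^sub>v y \<in> carrier_vec p"
      using W y by simp
    have "(W *\<^sub>v y) \<bullet> (W *\<^sub>v y) = (transpose_mat W *\<^sub>v (W *\<^sub>v y)) \<bullet> y"
      by (rule transpose_vec_mult_scalar[OF W y Wy, symmetric])
    also have "\<dots> = ((transpose_mat W * W) *\<^sub>v y) \<bullet> y"
      using W y by simp
    also have "\<dots> = 0"
      using Gy y by simp
    finally show ?thesis
      using conjugate_square_eq_0_vec[OF Wy] W_inj[OF y] by simp
  qed
  then have "det (transpose_mat W * W) \<noteq> 0"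
    using det_0_iff_vec_prod_zero_field[OF G] by blast
  from det_non_zero_imp_unit[OF G this, of "()"]
  show ?thesis
    using that unfolding Units_def ring_mat_simps by auto
qed

lemma vandermonde_injective:
  fixes e y :: "nat \<Rightarrow> 'a :: field"
  assumes inj: "inj_on e {..<s}" and s_le: "s \<le> k + 1"
    and y: "\<And>j. j \<le> k \<Longrightarrow> (\<Sum>m<s. y m * e m ^ j) = 0" and m0: "m0 < s"
  shows "y m0 = 0"
proof -
  define L where "L = (\<Prod>m\<in>{..<s} - {m0}. [:- e m, 1:])"
  have L_roots: "poly L (e m) = (\<Prod>m'\<in>{..<s} - {m0}. e m - e m')" for m
    unfolding L_def poly_prod by simp
  have "degree L \<le> k"
  proof -
    have "degree L \<le> sum (degree \<circ> (\<lambda>m. [:- e m, 1:])) ({..<s} - {m0})"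
      unfolding L_def by (rule degree_prod_sum_le) simp
    also have "\<dots> = s - 1"
      using m0 by simp
    finally show ?thesis
      using s_le by simp
  qed
  then have poly_L: "poly L t = (\<Sum>j\<le>k. coeff L j * t ^ j)" for t
    unfolding poly_altdef by (intro sum.mono_neutral_left) (auto simp: coeff_eq_0)
  have "0 = (\<Sum>j\<le>k. coeff L j * (\<Sum>m<s. y m * e m ^ j))"
    using y by simp
  also have "\<dots> = (\<Sum>m<s. y m * poly L (e m))"
    by (simp add: poly_L sum_distrib_left sum_distrib_right sum.swap[of _ "{..k}"] mult_ac)
  also have "\<dots> = y m0 * poly L (e m0)"
  proof -
    have "poly L (e m) = 0" if "m \<in> {..<s} - {m0}" for m
      using that by (auto simp: L_roots prod_zero_iff)
    then show ?thesis
      using m0 by (simp add: sum.remove[of _ m0])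
  qed
  finally show ?thesis
    using inj m0 by (auto simp: L_roots inj_on_def)
qed

lemma sum_square_residual_le:
  fixes a c :: "'i \<Rightarrow> real"
  assumes c_pos: "(\<Sum>i\<in>I. c i ^ 2) > 0"
  shows "(\<Sum>i\<in>I. (a i - c i * (\<Sum>j\<in>I. c j * a j) / (\<Sum>j\<in>I. c j ^ 2)) ^ 2) \<le> (\<Sum>i\<in>I. a i ^ 2)"
proof -
  define ca cc where "ca = (\<Sum>j\<in>I. c j * a j)" and "cc = (\<Sum>j\<in>I. c j ^ 2)"
  have "(\<Sum>i\<in>I. (a i - c i * ca / cc) ^ 2)
      = (\<Sum>i\<in>I. a i ^ 2 - 2 * (ca / cc) * (c i * a i) + (ca / cc) ^ 2 * c i ^ 2)"
    by (intro sum.cong) (auto simp: power2_eq_square algebra_simps)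
  also have "\<dots> = (\<Sum>i\<in>I. a i ^ 2) - 2 * (ca / cc) * ca + (ca / cc) ^ 2 * cc"
    unfolding ca_def cc_def by (simp add: sum.distrib sum_subtractf sum_distrib_left)
  also have "\<dots> = (\<Sum>i\<in>I. a i ^ 2) - ca ^ 2 / cc"
    using c_pos unfolding cc_def[symmetric] by (simp add: field_simps power2_eq_square)
  finally show ?thesis
    using c_pos unfolding ca_def cc_def by simp
qed

lemma spec_norm_eqI:
  assumes le: "\<And>v. v \<in> carrier_vec (dim_col M) \<Longrightarrow> vnorm v = 1 \<Longrightarrow> vnorm (M *\<^sub>v v) \<le> L"
    and v: "v \<in> carrier_vec (dim_col M)" "vnorm v = 1" "vnorm (M *\<^sub>v v) = L"
  shows "spec_norm M = L"
  unfolding spec_norm_def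
  by (rule cSup_eq_maximum) (use le v in fastforce)+

lemma scalar_prod_vec_sum:
  fixes u :: "'a :: comm_semiring_0 vec"
  assumes h: "\<And>m. m \<in> M \<Longrightarrow> h m \<in> carrier_vec n" and u: "u \<in> carrier_vec n"
  shows "u \<bullet> vec n (\<lambda>r. \<Sum>m\<in>M. g m * h m $ r) = (\<Sum>m\<in>M. g m * (u \<bullet> h m))"
proof -
  have h_dim: "dim_vec (h m) = n" if "m \<in> M" for m
    using h[OF that] by simp
  have "u \<bullet> vec n (\<lambda>r. \<Sum>m\<in>M. g m * h m $ r) = (\<Sum>r<n. \<Sum>m\<in>M. g m * (u $ r * h m $ r))"
    using u by (simp add: scalar_prod_def sum_distrib_left mult_ac lessThan_atLeast0)
  also have "\<dots> = (\<Sum>m\<in>M. g m * (u \<bullet> h m))"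
    using h_dim by (subst sum.swap) (auto simp: scalar_prod_def sum_distrib_left lessThan_atLeast0 intro!: sum.cong)
  finally show ?thesis .
qed

locale orthonormal_eigenbasis =
  fixes A :: "real mat" and n :: nat and q :: "nat \<Rightarrow> real vec" and lam :: "nat \<Rightarrow> real"
  assumes A_carrier: "A \<in> carrier_mat n n"
    and A_sym: "transpose_mat A = A"
    and q_dim: "\<And>i. i < n \<Longrightarrow> q i \<in> carrier_vec n"
    and q_orthonormal: "\<And>i j. i < n \<Longrightarrow> j < n \<Longrightarrow> q i \<bullet> q j = (if i = j then 1 else 0)"
    and q_eig: "\<And>i. i < n \<Longrightarrow> A *\<^sub>v q i = lam i \<cdot>\<^sub>v q i"
begin

definition eigen_comb :: "nat set \<Rightarrow> (nat \<Rightarrow> real) \<Rightarrow> real vec" where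
  "eigen_comb I f = vec n (\<lambda>r. \<Sum>i\<in>I. f i * q i $ r)"

lemma eigen_comb_carrier [simp]: "eigen_comb I f \<in> carrier_vec n"
  unfolding eigen_comb_def by simp

lemma scalar_prod_eigen_comb:
  assumes I: "I \<subseteq> {..<n}" and u: "u \<in> carrier_vec n"
  shows "u \<bullet> eigen_comb I f = (\<Sum>i\<in>I. f i * (u \<bullet> q i))"
  unfolding eigen_comb_def
  using I u q_dim by (intro scalar_prod_vec_sum) auto

lemma q_scalar_prod_eigen_comb:
  assumes I: "I \<subseteq> {..<n}" and j: "j < n"
  shows "q j \<bullet> eigen_comb I f = (if j \<in> I then f j else 0)"
proof -
  have "q j \<bullet> eigen_comb I f = (\<Sum>i\<in>I. if i = j then f i else 0)"
    unfolding scalar_prod_eigen_comb[OF I q_dim[OF j]]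
    using I j by (intro sum.cong) (auto simp: q_orthonormal)
  then show ?thesis
    using finite_subset[OF I] by simp
qed

definition Q :: "real mat" where
  "Q = mat n n (\<lambda>(i, r). q i $ r)"

lemma Q_carrier: "Q \<in> carrier_mat n n"
  unfolding Q_def by simp

lemma row_Q:
  assumes i: "i < n"
  shows "row Q i = q i"
proof -
  have "dim_vec (q i) = n"
    using q_dim[OF i] by simp
  then show ?thesis
    using i unfolding Q_def by (intro eq_vecI) auto
qed

lemma Q_mult_transpose: "Q * transpose_mat Q = 1\<^sub>m n"
  using Q_carrier by (intro eq_matI) (auto simp: row_Q q_orthonormal)

lemma transpose_Q_mult: "transpose_mat Q * Q = 1\<^sub>m n"
  using mat_mult_left_right_inverse[OF Q_carrier _ Q_mult_transpose] Q_carrier by simp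

lemma eigen_expansion:
  assumes w: "w \<in> carrier_vec n"
  shows "w = eigen_comb {..<n} (\<lambda>i. q i \<bullet> w)"
proof -
  have "w = (transpose_mat Q * Q) *\<^sub>v w"
    using w by (simp add: transpose_Q_mult)
  also have "\<dots> = transpose_mat Q *\<^sub>v (Q *\<^sub>v w)"
    using Q_carrier w by (intro assoc_mult_mat_vec) auto
  also have "\<dots> = eigen_comb {..<n} (\<lambda>i. q i \<bullet> w)"
    using Q_carrier w
    by (intro eq_vecI) (auto simp: eigen_comb_def scalar_prod_def row_Q lessThan_atLeast0 Q_def mult.commute)
  finally show ?thesis .
qed

lemma parseval:
  assumes w: "w \<in> carrier_vec n"
  shows "w \<bullet> w = (\<Sum>i<n. (q i \<bullet> w) ^ 2)"
proof -
  have "w \<bullet> w = (\<Sum>i<n. (q i \<bullet> w) * (w \<bullet> q i))"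
    by (subst (2) eigen_expansion[OF w]) (simp add: scalar_prod_eigen_comb w)
  also have "\<dots> = (\<Sum>i<n. (q i \<bullet> w) ^ 2)"
    using w q_dim by (intro sum.cong) (auto simp: comm_scalar_prod[of _ n] power2_eq_square)
  finally show ?thesis .
qed

lemma q_scalar_prod_mult:
  assumes u: "u \<in> carrier_vec n" and i: "i < n"
  shows "q i \<bullet> (A *\<^sub>v u) = lam i * (q i \<bullet> u)"
proof -
  have "q i \<bullet> (A *\<^sub>v u) = (transpose_mat A *\<^sub>v q i) \<bullet> u"
    by (rule transpose_vec_mult_scalar[OF A_carrier u q_dim[OF i], symmetric])
  then show ?thesis
    using A_sym q_eig[OF i] u q_dim[OF i] by simp
qed

abbreviation eigvals :: "real set" where
  "eigvals \<equiv> lam ` {..<n}"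

definition eig_idx :: "real \<Rightarrow> nat set" where
  "eig_idx mu = {i \<in> {..<n}. lam i = mu}"

lemma eig_idx_subset: "eig_idx mu \<subseteq> {..<n}"
  unfolding eig_idx_def by auto

lemma finite_eig_idx [simp]: "finite (eig_idx mu)"
  using finite_subset[OF eig_idx_subset] by simp

lemma mem_eig_idx: "i \<in> eig_idx mu \<longleftrightarrow> i < n \<and> lam i = mu"
  unfolding eig_idx_def by simp

lemma sum_by_eigenvalue: "(\<Sum>i<n. f i) = (\<Sum>mu\<in>eigvals. \<Sum>i\<in>eig_idx mu. f i)"
  unfolding eig_idx_def by (rule sum.group[symmetric]) auto

definition Lam :: "real mat" where
  "Lam = mat n n (\<lambda>(i, j). if i = j then lam i else 0)"

lemma similar_diag: "similar_mat A Lam"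
proof (rule similar_matI)
  have Qt: "transpose_mat Q \<in> carrier_mat n n"
    using Q_carrier by simp
  have "A * transpose_mat Q = transpose_mat Q * Lam"
  proof (rule eq_matI)
    fix r i assume "r < dim_row (transpose_mat Q * Lam)" "i < dim_col (transpose_mat Q * Lam)"
    then have r: "r < n" and i: "i < n"
      using Q_carrier by (auto simp: Lam_def)
    have "(A * transpose_mat Q) $$ (r, i) = (A *\<^sub>v q i) $ r"
      using r i A_carrier Q_carrier by (simp add: row_Q)
    also have "\<dots> = lam i * q i $ r"
      using q_eig[OF i] q_dim[OF i] r by simp
    also have "\<dots> = (\<Sum>t<n. q t $ r * (if t = i then lam t else 0))"
      using i by (simp add: if_distrib[of "\<lambda>x. _ * x"] sum.delta' mult.commute cong: if_cong)
    also have "\<dots> = (transpose_mat Q * Lam) $$ (r, i)"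
      using r i Q_carrier by (simp add: Lam_def Q_def scalar_prod_def lessThan_atLeast0)
    finally show "(A * transpose_mat Q) $$ (r, i) = (transpose_mat Q * Lam) $$ (r, i)" .
  qed (use A_carrier Q_carrier in \<open>auto simp: Lam_def\<close>)
  then have "A = transpose_mat Q * Lam * Q"
    using A_carrier Q_carrier Qt transpose_Q_mult
    by (metis assoc_mult_mat right_mult_one_mat)
  then show "{A, Lam, transpose_mat Q, Q} \<subseteq> carrier_mat n n" "transpose_mat Q * Q = 1\<^sub>m n"
    "Q * transpose_mat Q = 1\<^sub>m n" "A = transpose_mat Q * Lam * Q"
    using A_carrier Q_carrier transpose_Q_mult Q_mult_transpose by (auto simp: Lam_def)
qed

lemma alg_mult_eq_card: "alg_mult A mu = card (eig_idx mu)"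
proof -
  have "char_poly A = (\<Prod>a\<leftarrow>diag_mat Lam. [:- a, 1:])"
    unfolding char_poly_similar[OF similar_diag]
    by (rule char_poly_upper_triangular) (auto simp: Lam_def upper_triangular_def)
  also have "diag_mat Lam = map lam [0..<n]"
    unfolding diag_mat_def Lam_def by simp
  finally have char_poly: "char_poly A = (\<Prod>i\<leftarrow>[0..<n]. [:- lam i, 1:])"
    by (simp add: o_def)
  have "alg_mult A mu = (\<Sum>i\<leftarrow>[0..<n]. order mu [:- lam i, 1:])"
    unfolding alg_mult_def char_poly by (subst order_prod_list) (auto simp: o_def)
  also have "\<dots> = (\<Sum>i<n. if lam i = mu then 1 else 0)"
    by (simp add: order_linear' sum_list_sum_nth lessThan_atLeast0)
  finally show ?thesis
    unfolding eig_idx_def by (simp add: sum.If_cases Int_def)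
qed

end

locale krylov_sequence = orthonormal_eigenbasis +
  fixes x :: "nat \<Rightarrow> real vec" and k :: nat
  assumes x0_dim: "x 0 \<in> carrier_vec n"
    and x0_generic: "\<And>i. i < n \<Longrightarrow> q i \<bullet> x 0 \<noteq> 0"
    and x_rec: "\<And>t. x (Suc t) = A *\<^sub>v x t"
    and k_ge: "card eigvals \<le> k"
begin

definition X :: "real mat" where
  "X = mat n (k + 1) (\<lambda>(i, j). x j $ i)"

definition Y :: "real mat" where
  "Y = mat n (k + 1) (\<lambda>(i, j). x (j + 1) $ i)"

definition c :: "nat \<Rightarrow> real" where
  "c i = q i \<bullet> x 0"

lemma x_carrier: "x j \<in> carrier_vec n"
  by (induction j) (use x0_dim A_carrier x_rec in auto)

lemma q_scalar_prod_x: "i < n \<Longrightarrow> q i \<bullet> x j = lam i ^ j * c i"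
  by (induction j) (auto simp: c_def x_rec q_scalar_prod_mult x_carrier)

definition x0_part :: "real \<Rightarrow> real vec" where
  "x0_part mu = eigen_comb (eig_idx mu) c"

definition x0_part_sq :: "real \<Rightarrow> real" where
  "x0_part_sq mu = (\<Sum>i\<in>eig_idx mu. c i ^ 2)"

lemma x0_part_carrier [simp]: "x0_part mu \<in> carrier_vec n"
  unfolding x0_part_def by simp

lemma dim_x0_part [simp]: "dim_vec (x0_part mu) = n"
  unfolding x0_part_def eigen_comb_def by simp

lemma x0_part_sq_pos:
  assumes "mu \<in> eigvals"
  shows "x0_part_sq mu > 0"
proof -
  obtain i where "i \<in> eig_idx mu"
    using assms by (auto simp: mem_eig_idx)
  moreover have "c j ^ 2 > 0" if "j \<in> eig_idx mu" for j
    using that x0_generic by (simp add: mem_eig_idx c_def)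
  ultimately show ?thesis
    unfolding x0_part_sq_def by (intro sum_pos) auto
qed

lemma q_scalar_prod_x0_part: "i < n \<Longrightarrow> q i \<bullet> x0_part mu = (if lam i = mu then c i else 0)"
  unfolding x0_part_def by (simp add: q_scalar_prod_eigen_comb[OF eig_idx_subset] mem_eig_idx)

lemma x0_part_scalar_prod:
  assumes u: "u \<in> carrier_vec n"
  shows "x0_part mu \<bullet> u = (\<Sum>j\<in>eig_idx mu. c j * (q j \<bullet> u))"
proof -
  have "x0_part mu \<bullet> u = u \<bullet> x0_part mu"
    using u by (simp add: comm_scalar_prod[of _ n])
  also have "\<dots> = (\<Sum>j\<in>eig_idx mu. c j * (q j \<bullet> u))"
    unfolding x0_part_def scalar_prod_eigen_comb[OF eig_idx_subset u]
    using u q_dim by (intro sum.cong) (auto simp: mem_eig_idx comm_scalar_prod[of _ n])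
  finally show ?thesis .
qed

lemma x0_part_orthogonal: "x0_part mu \<bullet> x0_part nu = (if mu = nu then x0_part_sq mu else 0)"
  unfolding x0_part_scalar_prod[OF x0_part_carrier] x0_part_sq_def
  by (auto simp: mem_eig_idx q_scalar_prod_x0_part power2_eq_square intro!: sum.neutral)

definition eigval :: "nat \<Rightarrow> real" where
  "eigval = (!) (sorted_list_of_set eigvals)"

definition s :: nat where
  "s = card eigvals"

lemma eigval_bij: "bij_betw eigval {..<s} eigvals"
  unfolding eigval_def s_def by (intro bij_betw_nth) auto

lemma sum_eigval: "(\<Sum>m<s. g (eigval m)) = (\<Sum>mu\<in>eigvals. g mu)"
  by (rule sum.reindex_bij_betw[OF eigval_bij])

definition V :: "real mat" where
  "V = mat n s (\<lambda>(r, m). x0_part (eigval m) $ r)"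

definition W :: "real mat" where
  "W = mat (k + 1) s (\<lambda>(j, m). eigval m ^ j)"

definition V_gram_inv :: "real mat" where
  "V_gram_inv = mat s s (\<lambda>(a, b). if a = b then 1 / x0_part_sq (eigval a) else 0)"

lemma V_carrier: "V \<in> carrier_mat n s"
  unfolding V_def by simp

lemma W_carrier: "W \<in> carrier_mat (k + 1) s"
  unfolding W_def by simp

lemma V_gram_inv_carrier: "V_gram_inv \<in> carrier_mat s s"
  unfolding V_gram_inv_def by simp

lemma col_V: "m < s \<Longrightarrow> col V m = x0_part (eigval m)"
  unfolding V_def by (intro eq_vecI) auto

lemma X_factorization: "X = V * transpose_mat W"
proof (rule eq_matI)
  fix r j assume "r < dim_row (V * transpose_mat W)" "j < dim_col (V * transpose_mat W)"
  then have r: "r < n" and j: "j < k + 1"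
    using V_carrier W_carrier by auto
  have "(V * transpose_mat W) $$ (r, j) = (\<Sum>m<s. x0_part (eigval m) $ r * eigval m ^ j)"
    using r j by (simp add: V_def W_def scalar_prod_def atLeast0LessThan)
  also have "\<dots> = (\<Sum>mu\<in>eigvals. x0_part mu $ r * mu ^ j)"
    by (rule sum_eigval)
  also have "\<dots> = (\<Sum>mu\<in>eigvals. \<Sum>i\<in>eig_idx mu. lam i ^ j * c i * q i $ r)"
    using r by (intro sum.cong) (auto simp: x0_part_def eigen_comb_def sum_distrib_right mem_eig_idx
        intro!: sum.cong)
  also have "\<dots> = x j $ r"
    using r by (subst eigen_expansion[OF x_carrier]) (simp add: sum_by_eigenvalue eigen_comb_def q_scalar_prod_x)
  finally show "X $$ (r, j) = (V * transpose_mat W) $$ (r, j)"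
    using r j by (simp add: X_def)
qed (use V_carrier W_carrier in \<open>auto simp: X_def\<close>)

lemma V_gram_inv_left_inverse: "V_gram_inv * (transpose_mat V * V) = 1\<^sub>m s"
proof (rule eq_matI)
  fix a b assume "a < dim_row (1\<^sub>m s)" "b < dim_col (1\<^sub>m s)"
  then have a: "a < s" and b: "b < s"
    by auto
  have e_a: "eigval a \<in> eigvals" and inj: "eigval a = eigval b \<longleftrightarrow> a = b"
    using a b eigval_bij by (auto simp: bij_betw_def inj_on_def)
  have "(V_gram_inv * (transpose_mat V * V)) $$ (a, b)
      = (x0_part (eigval a) \<bullet> x0_part (eigval b)) / x0_part_sq (eigval a)"
    using a b V_carrier
    by (simp add: V_gram_inv_def scalar_prod_def col_V if_distrib[of "\<lambda>x. x * _"] sum.delta cong: if_cong)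
  also have "\<dots> = 1\<^sub>m s $$ (a, b)"
    using a b x0_part_sq_pos[OF e_a] by (cases "a = b") (simp_all add: x0_part_orthogonal inj)
  finally show "(V_gram_inv * (transpose_mat V * V)) $$ (a, b) = 1\<^sub>m s $$ (a, b)" .
qed (use V_carrier V_gram_inv_carrier in auto)

lemma W_injective:
  assumes y: "y \<in> carrier_vec s" and Wy: "W *\<^sub>v y = 0\<^sub>v (k + 1)"
  shows "y = 0\<^sub>v s"
proof (rule eq_vecI)
  fix m assume "m < dim_vec (0\<^sub>v s)"
  then have m: "m < s"
    by simp
  have "(\<Sum>m<s. y $ m * eigval m ^ j) = 0" if "j \<le> k" for j
    using arg_cong[OF Wy, of "\<lambda>v. v $ j"] that y
    by (simp add: W_def scalar_prod_def lessThan_atLeast0 mult.commute)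
  with eigval_bij k_ge m show "y $ m = 0\<^sub>v s $ m"
    using vandermonde_injective[of eigval s k "\<lambda>m. y $ m" m] by (auto simp: bij_betw_def s_def)
qed (use y in simp)

definition krylov_proj :: "real mat" where
  "krylov_proj = V * (V_gram_inv * transpose_mat V)"

lemma krylov_proj_carrier: "krylov_proj \<in> carrier_mat n n"
  unfolding krylov_proj_def using V_carrier V_gram_inv_carrier by simp

lemma Y_mult_pinv_X: "Y * pinv X = A * krylov_proj"
proof -
  obtain Dw where Dw: "Dw \<in> carrier_mat s s" "Dw * (transpose_mat W * W) = 1\<^sub>m s"
    using gram_left_inverse[OF W_carrier W_injective] by blast
  note factorization = pinv_full_rank_factorization[OF V_carrier W_carrier V_gram_inv_carrier Dw(1)
      V_gram_inv_left_inverse Dw(2), folded X_factorization]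
  have X: "X \<in> carrier_mat n (k + 1)"
    unfolding X_def by simp
  have pinv_X: "pinv X \<in> carrier_mat (k + 1) n"
    unfolding factorization(1) using W_carrier Dw(1) V_gram_inv_carrier V_carrier by auto
  have col_X: "col X j = x j" if "j < k + 1" for j
    using that x_carrier[of j] unfolding X_def by (intro eq_vecI) auto
  have "Y = A * X"
    using A_carrier X by (intro eq_matI) (auto simp: Y_def col_X x_rec)
  then have "Y * pinv X = A * (X * pinv X)"
    using A_carrier X pinv_X by simp
  then show ?thesis
    unfolding factorization(2) krylov_proj_def .
qed

lemma krylov_proj_mult_vec:
  assumes v: "v \<in> carrier_vec n"
  shows "krylov_proj *\<^sub>v v = vec n (\<lambda>r. \<Sum>mu\<in>eigvals. (x0_part mu \<bullet> v / x0_part_sq mu) * x0_part mu $ r)"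
proof -
  have Vt: "transpose_mat V \<in> carrier_mat s n"
    using V_carrier by simp
  define z where "z = V_gram_inv *\<^sub>v (transpose_mat V *\<^sub>v v)"
  have z: "z \<in> carrier_vec s"
    unfolding z_def using V_gram_inv_carrier Vt v by simp
  have z_coeff: "z $ m = x0_part (eigval m) \<bullet> v / x0_part_sq (eigval m)" if m: "m < s" for m
    unfolding z_def
    using m V_carrier by (simp add: V_gram_inv_def scalar_prod_def col_V if_distrib[of "\<lambda>x. x * _"] sum.delta cong: if_cong)
  have "krylov_proj *\<^sub>v v = V *\<^sub>v z"
    unfolding krylov_proj_def z_def
    using assoc_mult_mat_vec[OF V_carrier mult_carrier_mat[OF V_gram_inv_carrier Vt] v]
      assoc_mult_mat_vec[OF V_gram_inv_carrier Vt v] by simp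
  also have "\<dots> = vec n (\<lambda>r. \<Sum>m<s. (x0_part (eigval m) \<bullet> v / x0_part_sq (eigval m)) * x0_part (eigval m) $ r)"
    using V_carrier z by (intro eq_vecI) (auto simp: V_def scalar_prod_def z_coeff atLeast0LessThan mult.commute)
  also have "\<dots> = vec n (\<lambda>r. \<Sum>mu\<in>eigvals. (x0_part mu \<bullet> v / x0_part_sq mu) * x0_part mu $ r)"
    by (subst sum_eigval) (rule refl)
  finally show ?thesis .
qed

lemma q_scalar_prod_krylov_proj:
  assumes v: "v \<in> carrier_vec n" and i: "i < n"
  shows "q i \<bullet> (krylov_proj *\<^sub>v v) = c i * (x0_part (lam i) \<bullet> v) / x0_part_sq (lam i)"
proof -
  have "q i \<bullet> (krylov_proj *\<^sub>v v)
      = (\<Sum>mu\<in>eigvals. (x0_part mu \<bullet> v / x0_part_sq mu) * (q i \<bullet> x0_part mu))"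
    unfolding krylov_proj_mult_vec[OF v] using q_dim[OF i] by (intro scalar_prod_vec_sum) auto
  also have "\<dots> = (\<Sum>mu\<in>eigvals. if mu = lam i then c i * (x0_part mu \<bullet> v) / x0_part_sq mu else 0)"
    using i by (intro sum.cong) (auto simp: q_scalar_prod_x0_part)
  finally show ?thesis
    using i by simp
qed

(* The eigen-coordinates of (I - krylov_proj) v in terms of the eigen-coordinates a of v. *)
definition residual :: "(nat \<Rightarrow> real) \<Rightarrow> nat \<Rightarrow> real" where
  "residual a i = a i - c i * (\<Sum>j\<in>eig_idx (lam i). c j * a j) / x0_part_sq (lam i)"

lemma q_scalar_prod_residual:
  assumes v: "v \<in> carrier_vec n" and i: "i < n"
  shows "q i \<bullet> ((A - A * krylov_proj) *\<^sub>v v) = lam i * residual (\<lambda>j. q j \<bullet> v) i"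
proof -
  have Pv: "krylov_proj *\<^sub>v v \<in> carrier_vec n"
    using krylov_proj_carrier v by simp
  have "(A - A * krylov_proj) *\<^sub>v v = A *\<^sub>v (v - krylov_proj *\<^sub>v v)"
    using A_carrier krylov_proj_carrier v Pv
    by (simp add: minus_mult_distrib_mat_vec mult_minus_distrib_mat_vec)
  then have "q i \<bullet> ((A - A * krylov_proj) *\<^sub>v v) = lam i * (q i \<bullet> v - q i \<bullet> (krylov_proj *\<^sub>v v))"
    using v Pv q_dim[OF i] i by (simp add: q_scalar_prod_mult scalar_prod_minus_distrib)
  then show ?thesis
    unfolding residual_def q_scalar_prod_krylov_proj[OF v i] x0_part_scalar_prod[OF v] by simp
qed

lemma residual_norm_sq:
  assumes v: "v \<in> carrier_vec n"
  shows "((A - A * krylov_proj) *\<^sub>v v) \<bullet> ((A - A * krylov_proj) *\<^sub>v v)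
    = (\<Sum>i<n. (lam i * residual (\<lambda>j. q j \<bullet> v) i) ^ 2)"
proof -
  have "A - A * krylov_proj \<in> carrier_mat n n"
    using A_carrier krylov_proj_carrier by (intro minus_carrier_mat) auto
  then have w: "(A - A * krylov_proj) *\<^sub>v v \<in> carrier_vec n"
    using v by simp
  show ?thesis
    unfolding parseval[OF w] by (intro sum.cong) (simp_all add: q_scalar_prod_residual[OF v])
qed

lemma sum_residual_sq_le: "(\<Sum>i<n. residual a i ^ 2) \<le> (\<Sum>i<n. a i ^ 2)"
  unfolding sum_by_eigenvalue
proof (rule sum_mono)
  fix mu assume mu: "mu \<in> eigvals"
  have "(\<Sum>i\<in>eig_idx mu. residual a i ^ 2)
      = (\<Sum>i\<in>eig_idx mu. (a i - c i * (\<Sum>j\<in>eig_idx mu. c j * a j) / (\<Sum>j\<in>eig_idx mu. c j ^ 2)) ^ 2)"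
    by (intro sum.cong) (auto simp: residual_def x0_part_sq_def mem_eig_idx)
  also have "\<dots> \<le> (\<Sum>i\<in>eig_idx mu. a i ^ 2)"
    using x0_part_sq_pos[OF mu] unfolding x0_part_sq_def by (rule sum_square_residual_le)
  finally show "(\<Sum>i\<in>eig_idx mu. residual a i ^ 2) \<le> (\<Sum>i\<in>eig_idx mu. a i ^ 2)" .
qed

lemma residual_simple_eigenvalue:
  assumes i: "i < n" and simple: "\<not> alg_mult A (lam i) > 1"
  shows "residual a i = 0"
proof -
  have "card (eig_idx (lam i)) \<le> 1"
    using simple unfolding alg_mult_eq_card by simp
  moreover have "i \<in> eig_idx (lam i)"
    using i by (simp add: mem_eig_idx)
  ultimately have "eig_idx (lam i) = {i}"
    by (auto simp: card_le_Suc0_iff_eq)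
  then show ?thesis
    using x0_generic[OF i] by (simp add: residual_def x0_part_sq_def c_def power2_eq_square)
qed

definition lamstar :: real where
  "lamstar = Max {\<bar>lam i\<bar> | i. i < n \<and> alg_mult A (lam i) > 1}"

lemma abs_le_lamstar: "i < n \<Longrightarrow> alg_mult A (lam i) > 1 \<Longrightarrow> \<bar>lam i\<bar> \<le> lamstar"
  unfolding lamstar_def by (intro Max_ge) auto

lemma residual_norm_le:
  assumes v: "v \<in> carrier_vec n" "vnorm v = 1" and repeated: "\<exists>i<n. alg_mult A (lam i) > 1"
  shows "vnorm ((A - A * krylov_proj) *\<^sub>v v) \<le> lamstar"
proof -
  define a where "a j = q j \<bullet> v" for j
  have lamstar_nonneg: "lamstar \<ge> 0"
    using repeated abs_le_lamstar by force
  have "(lam i * residual a i) ^ 2 \<le> lamstar ^ 2 * residual a i ^ 2" if "i < n" for i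
  proof (cases "alg_mult A (lam i) > 1")
    case True
    then have "lam i ^ 2 \<le> lamstar ^ 2"
      using abs_le_lamstar[OF that] by (metis abs_le_square_iff abs_of_nonneg lamstar_nonneg)
    then show ?thesis
      by (simp add: power_mult_distrib mult_right_mono)
  qed (simp add: residual_simple_eigenvalue[OF that])
  then have "((A - A * krylov_proj) *\<^sub>v v) \<bullet> ((A - A * krylov_proj) *\<^sub>v v)
      \<le> lamstar ^ 2 * (\<Sum>i<n. residual a i ^ 2)"
    unfolding residual_norm_sq[OF v(1)] a_def[symmetric] sum_distrib_left by (intro sum_mono) auto
  also have "\<dots> \<le> lamstar ^ 2 * (\<Sum>i<n. a i ^ 2)"
    by (intro mult_left_mono sum_residual_sq_le) auto
  also have "(\<Sum>i<n. a i ^ 2) = 1"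
    using v parseval unfolding a_def vnorm_def by simp
  finally show ?thesis
    unfolding vnorm_def using lamstar_nonneg by (simp add: real_le_lsqrt)
qed
lemma residual_norm_eigenvalue_pair:
  assumes i0: "i0 < n" and j0: "j0 < n" "lam j0 = lam i0" and j0_i0: "j0 \<noteq> i0"
  obtains v where "v \<in> carrier_vec n" "vnorm v = 1" "vnorm ((A - A * krylov_proj) *\<^sub>v v) = \<bar>lam i0\<bar>"
proof -
  \<comment> \<open>the unit vector in the span of \<open>q i0\<close> and \<open>q j0\<close> that is orthogonal to \<open>x 0\<close>\<close>
  define N where "N = sqrt (c i0 ^ 2 + c j0 ^ 2)"
  define f where "f i = (if i = i0 then c j0 / N else if i = j0 then - c i0 / N else 0)" for i
  define v where "v = eigen_comb {i0, j0} f"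
  have c_i0: "c i0 \<noteq> 0"
    using x0_generic[OF i0] by (simp add: c_def)
  then have c_sq_pos: "c i0 ^ 2 + c j0 ^ 2 > 0"
    by (simp add: add_pos_nonneg)
  then have N_sq: "N ^ 2 = c i0 ^ 2 + c j0 ^ 2"
    unfolding N_def by simp
  have sum_pair: "(\<Sum>i<n. g i) = g i0 + g j0" if "\<And>i. i \<notin> {i0, j0} \<Longrightarrow> g i = 0" for g :: "nat \<Rightarrow> real"
    using that i0 j0(1) j0_i0 by (subst sum.mono_neutral_right[where S = "{i0, j0}"]) auto
  have v: "v \<in> carrier_vec n"
    unfolding v_def by simp
  have q_v: "q i \<bullet> v = f i" if "i < n" for i
    unfolding v_def using q_scalar_prod_eigen_comb[of "{i0, j0}" i f] that i0 j0(1) by (auto simp: f_def)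
  have f_sq: "f i0 ^ 2 + f j0 ^ 2 = 1"
    using j0_i0 c_sq_pos c_i0 by (simp add: f_def power_divide N_sq add_divide_distrib[symmetric])
  have "v \<bullet> v = (\<Sum>i<n. f i ^ 2)"
    by (simp add: parseval[OF v] q_v)
  also have "\<dots> = 1"
    unfolding f_sq[symmetric] by (rule sum_pair) (simp add: f_def)
  finally have v_norm: "vnorm v = 1"
    unfolding vnorm_def by simp
  have f_orth: "(\<Sum>j\<in>eig_idx mu. c j * f j) = 0" for mu
  proof (cases "mu = lam i0")
    case True
    then have "(\<Sum>j\<in>eig_idx mu. c j * f j) = c i0 * f i0 + c j0 * f j0"
      using i0 j0 j0_i0 by (subst sum.mono_neutral_right[where S = "{i0, j0}"]) (auto simp: mem_eig_idx f_def)
    then show ?thesis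
      using j0_i0 by (simp add: f_def)
  qed (use j0 in \<open>auto simp: mem_eig_idx f_def intro!: sum.neutral\<close>)
  have "(\<Sum>j\<in>eig_idx mu. c j * (q j \<bullet> v)) = 0" for mu
    using f_orth[of mu] by (simp add: mem_eig_idx q_v cong: sum.cong_simp)
  then have residual_v: "residual (\<lambda>j. q j \<bullet> v) i = f i" if "i < n" for i
    using that by (simp add: residual_def q_v)
  have "((A - A * krylov_proj) *\<^sub>v v) \<bullet> ((A - A * krylov_proj) *\<^sub>v v) = (\<Sum>i<n. (lam i * f i) ^ 2)"
    by (simp add: residual_norm_sq[OF v] residual_v)
  also have "\<dots> = (lam i0 * f i0) ^ 2 + (lam j0 * f j0) ^ 2"
    by (rule sum_pair) (simp add: f_def)
  also have "\<dots> = lam i0 ^ 2"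
    using j0(2) f_sq by (simp add: power_mult_distrib flip: distrib_left)
  finally have "vnorm ((A - A * krylov_proj) *\<^sub>v v) = \<bar>lam i0\<bar>"
    unfolding vnorm_def by simp
  with v v_norm show ?thesis
    by (rule that)
qed

lemma residual_norm_attained:
  assumes repeated: "\<exists>i<n. alg_mult A (lam i) > 1"
  obtains v where "v \<in> carrier_vec n" "vnorm v = 1" "vnorm ((A - A * krylov_proj) *\<^sub>v v) = lamstar"
proof -
  have "lamstar \<in> {\<bar>lam i\<bar> | i. i < n \<and> alg_mult A (lam i) > 1}"
    unfolding lamstar_def using repeated by (intro Max_in) auto
  then obtain i0 where i0: "i0 < n" "alg_mult A (lam i0) > 1" "lamstar = \<bar>lam i0\<bar>"
    by auto
  have "\<not> eig_idx (lam i0) \<subseteq> {i0}"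
    using i0(2) card_mono[of "{i0}" "eig_idx (lam i0)"] unfolding alg_mult_eq_card by auto
  then obtain j0 where "j0 \<in> eig_idx (lam i0)" and j0_i0: "j0 \<noteq> i0"
    by blast
  then have j0: "j0 < n" "lam j0 = lam i0"
    by (simp_all add: mem_eig_idx)
  show ?thesis
    using residual_norm_eigenvalue_pair[OF i0(1) j0 j0_i0] that unfolding i0(3) .
qed

lemma spec_norm_residual:
  assumes "\<exists>i<n. alg_mult A (lam i) > 1"
  shows "spec_norm (A - A * krylov_proj) = lamstar"
proof -
  obtain v where "v \<in> carrier_vec n" "vnorm v = 1" "vnorm ((A - A * krylov_proj) *\<^sub>v v) = lamstar"
    using residual_norm_attained[OF assms] .
  then show ?thesis
    using residual_norm_le[OF _ _ assms] by (intro spec_norm_eqI) (auto simp: carrier_matD[OF krylov_proj_carrier])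
qed

end

theorem theorem4:
  fixes A :: "real mat" and n :: nat and q :: "nat \<Rightarrow> real vec" and lam :: "nat \<Rightarrow> real"
    and x :: "nat \<Rightarrow> real vec" and k :: nat
  assumes A_carrier: "A \<in> carrier_mat n n"
    and A_sym: "transpose_mat A = A"
    and q_dim: "\<And>i. i < n \<Longrightarrow> q i \<in> carrier_vec n"
    and q_orthonormal: "\<And>i j. i < n \<Longrightarrow> j < n \<Longrightarrow> q i \<bullet> q j = (if i = j then 1 else 0)"
    and q_eig: "\<And>i. i < n \<Longrightarrow> A *\<^sub>v q i = lam i \<cdot>\<^sub>v q i"
    and x0_dim: "x 0 \<in> carrier_vec n"
    and x0_generic: "\<And>i. i < n \<Longrightarrow> q i \<bullet> x 0 \<noteq> 0"
    and x_rec: "\<And>t. x (Suc t) = A *\<^sub>v x t"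
    and repeated: "\<exists>i<n. alg_mult A (lam i) > 1"
    and k_ge: "k \<ge> card (lam ` {..<n})"
  shows "let X = mat n (k + 1) (\<lambda>(i, j). x j $ i);
             Y = mat n (k + 1) (\<lambda>(i, j). x (j + 1) $ i);
             Ahat = Y * pinv X;
             lamstar = Max {\<bar>lam i\<bar> | i. i < n \<and> alg_mult A (lam i) > 1}
         in spec_norm (A - Ahat) = lamstar"
proof -
  interpret krylov_sequence A n q lam x k
    using assms by unfold_locales auto
  show ?thesis
    using Y_mult_pinv_X spec_norm_residual[OF repeated]
    unfolding Let_def X_def Y_def lamstar_def by simp
qed

end
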